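(* Let $\mathcal D$ be a non-trivial $2$-$(k^{2},k,\lambda)$ design with $\lambda\mid k$, admitting a flag-transitive automorphism group $G$. Then: (1) $G$ acts primitively on the point set; (2) for every point $x$, $G_x$ is a large subgroup of $G$; (3) for every point $y\ne x$ and every block $B$ containing $x$, $|y^{G_x}|=(k+1)\,|B\cap y^{G_x}|$; in particular $k+1$ divides the length of every $G_x$-orbit on points other than $\{x\}$.
   Context: A $2$-$(v,k,\lambda)$ design consists of $v$ points and a family of $k$-subsets (blocks) such that each pair of distinct points lies in exactly $\lambda$ blocks; non-trivial means $2<k<v$. $G\le\mathrm{Aut}(\mathcal D)$ is flag-transitive if transitive on pairs $(x,B)$ with $x\in B$. $G_x$ is the point stabilizer, $y^{G_x}$ the $G_x$-orbit of $y$. A subgroup $H$ of a finite group $K$ is large if $|K|<|H|^3$. *)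

theory Defs
  imports "HOL-Combinatorics.Permutations"
begin

definition design_2 :: "'a set \<Rightarrow> 'a set set \<Rightarrow> nat \<Rightarrow> nat \<Rightarrow> nat \<Rightarrow> bool" where
  "design_2 P \<B> v k lam \<longleftrightarrow> finite P \<and> card P = v \<and>
     (\<forall>B\<in>\<B>. B \<subseteq> P \<and> card B = k) \<and>
     (\<forall>x\<in>P. \<forall>y\<in>P. x \<noteq> y \<longrightarrow> card {B\<in>\<B>. x \<in> B \<and> y \<in> B} = lam)"

definition nontrivial_design :: "'a set \<Rightarrow> 'a set set \<Rightarrow> nat \<Rightarrow> nat \<Rightarrow> nat \<Rightarrow> bool" where
  "nontrivial_design P \<B> v k lam \<longleftrightarrow> design_2 P \<B> v k lam \<and> 2 < k \<and> k < v"

definition perm_group_on :: "'a set \<Rightarrow> ('a \<Rightarrow> 'a) set \<Rightarrow> bool" where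
  "perm_group_on P G \<longleftrightarrow> (\<forall>g\<in>G. g permutes P) \<and> id \<in> G \<and>
     (\<forall>g\<in>G. \<forall>h\<in>G. g \<circ> h \<in> G) \<and> (\<forall>g\<in>G. inv g \<in> G)"

definition automorphism_group :: "'a set \<Rightarrow> 'a set set \<Rightarrow> ('a \<Rightarrow> 'a) set \<Rightarrow> bool" where
  "automorphism_group P \<B> G \<longleftrightarrow> perm_group_on P G \<and> (\<forall>g\<in>G. \<forall>B\<in>\<B>. g ` B \<in> \<B>)"

definition flag_transitive :: "'a set \<Rightarrow> 'a set set \<Rightarrow> ('a \<Rightarrow> 'a) set \<Rightarrow> bool" where
  "flag_transitive P \<B> G \<longleftrightarrow>
     (\<forall>x B x' B'. B \<in> \<B> \<and> x \<in> B \<and> B' \<in> \<B> \<and> x' \<in> B' \<longrightarrow>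
        (\<exists>g\<in>G. g x = x' \<and> g ` B = B'))"

definition transitive_on :: "'a set \<Rightarrow> ('a \<Rightarrow> 'a) set \<Rightarrow> bool" where
  "transitive_on P G \<longleftrightarrow> (\<forall>x\<in>P. \<forall>y\<in>P. \<exists>g\<in>G. g x = y)"

definition primitive_on :: "'a set \<Rightarrow> ('a \<Rightarrow> 'a) set \<Rightarrow> bool" where
  "primitive_on P G \<longleftrightarrow> transitive_on P G \<and>
     (\<forall>\<Delta>. \<Delta> \<subseteq> P \<and> (\<forall>g\<in>G. g ` \<Delta> = \<Delta> \<or> g ` \<Delta> \<inter> \<Delta> = {})
          \<longrightarrow> card \<Delta> \<le> 1 \<or> \<Delta> = P)"

definition stabilizer :: "('a \<Rightarrow> 'a) set \<Rightarrow> 'a \<Rightarrow> ('a \<Rightarrow> 'a) set" where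
  "stabilizer G x = {g\<in>G. g x = x}"

definition orbit :: "('a \<Rightarrow> 'a) set \<Rightarrow> 'a \<Rightarrow> 'a set" where
  "orbit H y = (\<lambda>g. g y) ` H"

definition large_subgroup :: "('a \<Rightarrow> 'a) set \<Rightarrow> ('a \<Rightarrow> 'a) set \<Rightarrow> bool" where
  "large_subgroup H G \<longleftrightarrow> H \<subseteq> G \<and> card G < card H ^ 3"

end

theory Submission
  imports Defs
begin

text \<open>Flag-transitivity makes the stabilizer \<open>G\<^sub>x\<close> transitive on the \<open>r\<close> blocks through \<open>x\<close>,
  so a \<open>G\<^sub>x\<close>-invariant set \<open>S\<close> of points other than \<open>x\<close> meets each of them in the same number
  of points; counting flags \<open>(z, B)\<close> with \<open>z \<in> S\<close>, \<open>x \<in> B\<close> gives \<open>|S| \<lambda> = r |B \<inter> S|\<close>.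
  For \<open>S = P - {x}\<close> and \<open>v = k\<^sup>2\<close> this yields \<open>r = \<lambda>(k + 1)\<close>, hence \<open>|S| = (k + 1) |B \<inter> S|\<close>,
  which is part (3). Since \<open>|G\<^sub>x| \<ge> r > k\<close> and \<open>|G| \<le> k\<^sup>2 |G\<^sub>x|\<close>, the stabilizer is large.
  A nontrivial block of imprimitivity containing \<open>x\<close> would have size \<open>1\<close> modulo \<open>k + 1\<close>
  and dividing \<open>k\<^sup>2\<close>, which is impossible unless it is all of \<open>P\<close>.\<close>

lemma mod_eq_1_imp_ge:
  fixes c m :: nat
  assumes "c mod m = 1" "c \<noteq> 1"
  shows "m + 1 \<le> c"
  using assms by (metis Suc_eq_plus1 Suc_leI linorder_le_cases mod_less mod_self
      order_le_imp_less_or_eq zero_neq_one)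

lemma square_mod_Suc: "1 \<le> k \<Longrightarrow> (k::nat)^2 mod (k + 1) = 1"
proof -
  assume "1 \<le> k"
  then have "k^2 = 1 + (k - 1) * (k + 1)"
    by (cases k) (simp_all add: power2_eq_square)
  then have "k^2 mod (k + 1) = 1 mod (k + 1)"
    by (simp only: mod_mult_self1)
  then show ?thesis using \<open>1 \<le> k\<close> by simp
qed

lemma factor_of_square_mod_Suc:
  fixes c d k :: nat
  assumes cd: "c * d = k^2" and c: "c mod (k + 1) = 1" "c \<noteq> 1"
  shows "d = 1"
proof (rule ccontr)
  assume "d \<noteq> 1"
  have "1 \<le> k" using c by (cases k) auto
  have "d mod (k + 1) = (c * d) mod (k + 1)"
    using c by (simp add: mod_mult_left_eq[of c, symmetric])
  also have "\<dots> = 1" using cd square_mod_Suc[OF \<open>1 \<le> k\<close>] by simp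
  finally have "k + 2 \<le> d" using mod_eq_1_imp_ge \<open>d \<noteq> 1\<close> by fastforce
  with mod_eq_1_imp_ge[OF c] have "(k + 2) * (k + 2) \<le> c * d"
    by (intro mult_le_mono) auto
  then show False using cd by (simp add: power2_eq_square)
qed

lemma perm_group_on_finite: "perm_group_on P G \<Longrightarrow> finite P \<Longrightarrow> finite G"
  unfolding perm_group_on_def
  by (metis (mono_tags) finite_permutations finite_subset mem_Collect_eq subsetI)

lemma stabilizer_subset: "stabilizer G x \<subseteq> G"
  by (simp add: stabilizer_def)

lemma stabilizer_image_subset:
  assumes "perm_group_on P G" "g \<in> stabilizer G x"
  shows "g ` (P - {x}) \<subseteq> P - {x}"
proof -
  have p: "g permutes P" and "g x = x"
    using assms by (auto simp: perm_group_on_def stabilizer_def)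
  then have "g ` (P - {x}) = P - {x}"
    by (simp add: image_set_diff permutes_inj permutes_image)
  then show ?thesis by simp
qed

lemma orbit_stabilizer_subset:
  assumes "perm_group_on P G" "y \<in> P - {x}"
  shows "orbit (stabilizer G x) y \<subseteq> P - {x}"
  using stabilizer_image_subset[OF assms(1)] assms(2) by (fastforce simp: orbit_def)

lemma orbit_stabilizer_invariant:
  assumes "perm_group_on P G" "g \<in> stabilizer G x"
  shows "g ` orbit (stabilizer G x) y \<subseteq> orbit (stabilizer G x) y"
proof
  fix z assume "z \<in> g ` orbit (stabilizer G x) y"
  then obtain h where h: "h \<in> stabilizer G x" "z = (g \<circ> h) y" by (auto simp: orbit_def)
  with assms have "g \<circ> h \<in> stabilizer G x"
    by (auto simp: perm_group_on_def stabilizer_def)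
  with h show "z \<in> orbit (stabilizer G x) y"
    unfolding orbit_def by (intro image_eqI[of _ _ "g \<circ> h"]) simp_all
qed

text \<open>The elements of \<open>G\<close> sending \<open>x\<close> to \<open>y\<close> form a left coset of the stabilizer.\<close>
lemma card_le_card_times_card_stabilizer:
  assumes G: "perm_group_on P G" and "finite P" "x \<in> P"
  shows "card G \<le> card P * card (stabilizer G x)"
proof -
  have fin: "finite G" using perm_group_on_finite[OF G \<open>finite P\<close>] .
  have fibre: "card {g \<in> G. g x = y} \<le> card (stabilizer G x)" for y
  proof (cases "\<exists>h\<in>G. h x = y")
    case True
    then obtain h where h: "h \<in> G" "h x = y" by blast
    then have p: "h permutes P" using G by (simp add: perm_group_on_def)
    have "{g \<in> G. g x = y} \<subseteq> (\<lambda>s. h \<circ> s) ` stabilizer G x"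
    proof
      fix g assume g: "g \<in> {g \<in> G. g x = y}"
      then have "inv h \<circ> g \<in> stabilizer G x"
        using G h permutes_inverses(2)[OF p]
        by (auto simp: perm_group_on_def stabilizer_def)
      moreover have "g = h \<circ> (inv h \<circ> g)"
        by (simp add: o_assoc permutes_inverses(1)[OF p] fun_eq_iff)
      ultimately show "g \<in> (\<lambda>s. h \<circ> s) ` stabilizer G x" by blast
    qed
    then show ?thesis
      using fin stabilizer_subset finite_subset
      by (metis (no_types, lifting) card_image_le card_mono finite_imageI order_trans)
  next
    case False
    then have "{g \<in> G. g x = y} = {}" by blast
    then show ?thesis by (metis card.empty le0)
  qed
  have cover: "(\<Union>y\<in>P. {g \<in> G. g x = y}) = G"
    using G \<open>x \<in> P\<close> by (auto simp: perm_group_on_def permutes_in_image)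
  have "card G \<le> (\<Sum>y\<in>P. card {g \<in> G. g x = y})"
    using card_UN_le[OF \<open>finite P\<close>, of "\<lambda>y. {g \<in> G. g x = y}"] unfolding cover .
  also have "\<dots> \<le> card P * card (stabilizer G x)"
    using sum_bounded_above[of P, OF fibre] by simp
  finally show ?thesis .
qed

text \<open>The translates of a block of imprimitivity partition the points.\<close>
lemma block_card_dvd:
  assumes G: "perm_group_on P G" "transitive_on P G" and "finite P"
    and D: "D \<subseteq> P" "x \<in> D" "\<forall>g\<in>G. g ` D = D \<or> g ` D \<inter> D = {}"
  shows "card D dvd card P"
proof -
  define C where "C = (\<lambda>g. g ` D) ` G"
  have perm: "\<And>g. g \<in> G \<Longrightarrow> g permutes P" using G by (simp add: perm_group_on_def)
  have "\<Union>C = P"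
  proof
    show "\<Union>C \<subseteq> P" using D perm by (auto simp: C_def permutes_in_image)
    show "P \<subseteq> \<Union>C"
    proof
      fix y assume "y \<in> P"
      then obtain g where "g \<in> G" "g x = y"
        using G D unfolding transitive_on_def by blast
      then show "y \<in> \<Union>C" using D by (auto simp: C_def)
    qed
  qed
  moreover have "card A = card D" if "A \<in> C" for A
  proof -
    obtain g where "g \<in> G" "A = g ` D" using \<open>A \<in> C\<close> by (auto simp: C_def)
    then show ?thesis
      using card_image[OF inj_on_subset[OF permutes_inj[OF perm] subset_UNIV]] by simp
  qed
  moreover have "A1 \<inter> A2 = {}" if A: "A1 \<in> C" "A2 \<in> C" "A1 \<noteq> A2" for A1 A2
  proof (rule ccontr)
    obtain g h where gh: "g \<in> G" "h \<in> G" "A1 = g ` D" "A2 = h ` D"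
      using A(1,2) unfolding C_def by blast
    have ph: "h permutes P" using perm gh(2) .
    have "inv h \<circ> g \<in> G" using G gh by (simp add: perm_group_on_def)
    assume "A1 \<inter> A2 \<noteq> {}"
    then obtain a b where "a \<in> D" "b \<in> D" "g a = h b" using gh by blast
    then have "b \<in> (inv h \<circ> g) ` D \<inter> D"
      using permutes_inverses(2)[OF ph] by (metis IntI comp_apply image_eqI)
    then have "(inv h \<circ> g) ` D = D" using D \<open>inv h \<circ> g \<in> G\<close> by (metis empty_iff)
    moreover have "g ` D = h ` ((inv h \<circ> g) ` D)"
      by (simp add: image_image permutes_inverses(1)[OF ph])
    ultimately show False using gh A(3) by simp
  qed
  ultimately have "card D * card C = card P"
    using card_partition[of C] \<open>finite P\<close> G
    by (simp add: C_def perm_group_on_finite)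
  then show ?thesis by (metis dvd_triv_left)
qed

locale flag_transitive_design =
  fixes P :: "'a set" and \<B> :: "'a set set" and G :: "('a \<Rightarrow> 'a) set"
    and v k lam :: nat
  assumes design: "nontrivial_design P \<B> v k lam"
    and lam_pos: "0 < lam"
    and automorphisms: "automorphism_group P \<B> G"
    and flag_transitive: "flag_transitive P \<B> G"
begin

lemma finite_points: "finite P"
  and card_points: "card P = v"
  and block_subset: "B \<in> \<B> \<Longrightarrow> B \<subseteq> P"
  and card_block: "B \<in> \<B> \<Longrightarrow> card B = k"
  and card_blocks_through_pair:
    "x \<in> P \<Longrightarrow> y \<in> P \<Longrightarrow> x \<noteq> y \<Longrightarrow> card {B\<in>\<B>. x \<in> B \<and> y \<in> B} = lam"
  and block_size: "2 < k" "k < v"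
  using design by (auto simp: nontrivial_design_def design_2_def)

lemma perm_group: "perm_group_on P G"
  using automorphisms by (simp add: automorphism_group_def)

lemma finite_subset_points: "S \<subseteq> P \<Longrightarrow> finite S"
  by (rule finite_subset[OF _ finite_points])

lemma finite_blocks: "finite \<B>"
proof (rule finite_subset)
  show "\<B> \<subseteq> Pow P" using block_subset by blast
qed (simp add: finite_points)

definition blocks_through :: "'a \<Rightarrow> 'a set set" where
  "blocks_through x = {B\<in>\<B>. x \<in> B}"

lemma blocks_through_nonempty:
  assumes "x \<in> P"
  shows "blocks_through x \<noteq> {}"
proof -
  obtain y where y: "y \<in> P" "y \<noteq> x"
    using assms block_size card_points finite_points
    by (metis card_le_Suc0_iff_eq less_trans nat_less_le not_less_eq numeral_2_eq_2)
  then have "{B\<in>\<B>. x \<in> B \<and> y \<in> B} \<noteq> {}"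
    using card_blocks_through_pair assms lam_pos by (metis card.empty less_irrefl)
  then show ?thesis by (auto simp: blocks_through_def)
qed

lemma transitive: "transitive_on P G"
  unfolding transitive_on_def
proof (intro ballI)
  fix x y assume "x \<in> P" "y \<in> P"
  then obtain Bx By where "Bx \<in> blocks_through x" "By \<in> blocks_through y"
    using blocks_through_nonempty by blast
  then show "\<exists>g\<in>G. g x = y"
    using flag_transitive[unfolded flag_transitive_def, rule_format, of Bx x By y]
    by (auto simp: blocks_through_def)
qed

lemma stabilizer_transitive_on_blocks_through:
  assumes "B1 \<in> blocks_through x" "B2 \<in> blocks_through x"
  shows "\<exists>g\<in>stabilizer G x. g ` B1 = B2"
  using assms flag_transitive
  by (fastforce simp: flag_transitive_def blocks_through_def stabilizer_def)

lemma card_blocks_through_le_card_stabilizer: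
  assumes "x \<in> P"
  shows "card (blocks_through x) \<le> card (stabilizer G x)"
proof -
  obtain B0 where "B0 \<in> blocks_through x" using blocks_through_nonempty[OF assms] by blast
  then have "blocks_through x \<subseteq> (\<lambda>g. g ` B0) ` stabilizer G x"
    using stabilizer_transitive_on_blocks_through by blast
  moreover have fin: "finite (stabilizer G x)"
    using stabilizer_subset perm_group_on_finite[OF perm_group finite_points]
    by (rule finite_subset)
  ultimately have "card (blocks_through x) \<le> card ((\<lambda>g. g ` B0) ` stabilizer G x)"
    by (intro card_mono) auto
  also have "\<dots> \<le> card (stabilizer G x)"
    using fin by (rule card_image_le)
  finally show ?thesis .
qed

lemma card_inter_invariant_eq:
  assumes S: "S \<subseteq> P" "\<forall>g\<in>stabilizer G x. g ` S \<subseteq> S"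
    and B: "B1 \<in> blocks_through x" "B2 \<in> blocks_through x"
  shows "card (B1 \<inter> S) = card (B2 \<inter> S)"
proof -
  obtain g where g: "g \<in> stabilizer G x" "g ` B1 = B2"
    using stabilizer_transitive_on_blocks_through[OF B] by blast
  have "inj g"
    using g perm_group by (auto simp: perm_group_on_def stabilizer_def permutes_inj)
  moreover have "finite S" using S(1) by (rule finite_subset_points)
  ultimately have "g ` S = S"
    using S g by (metis card_image card_subset_eq inj_on_subset subset_UNIV)
  then have "g ` (B1 \<inter> S) = B2 \<inter> S"
    using g \<open>inj g\<close> by (simp add: image_Int)
  then show ?thesis
    using \<open>inj g\<close> by (metis card_image inj_on_subset subset_UNIV)
qed

text \<open>Double counting the flags \<open>(z, B)\<close> with \<open>z \<in> S\<close> and \<open>x \<in> B\<close>.\<close>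
lemma card_invariant_times_lam:
  assumes x: "x \<in> P" and S: "S \<subseteq> P - {x}" "\<forall>g\<in>stabilizer G x. g ` S \<subseteq> S"
    and B: "B \<in> blocks_through x"
  shows "card S * lam = card (blocks_through x) * card (B \<inter> S)"
proof -
  have fin: "finite S" "finite (blocks_through x)"
    using S(1) finite_subset_points finite_blocks by (auto simp: blocks_through_def)
  have "\<forall>z\<in>S. card {B' \<in> blocks_through x. z \<in> B'} = lam"
  proof
    fix z assume "z \<in> S"
    then have "{B' \<in> blocks_through x. z \<in> B'} = {B' \<in> \<B>. x \<in> B' \<and> z \<in> B'}"
      by (auto simp: blocks_through_def)
    with \<open>z \<in> S\<close> show "card {B' \<in> blocks_through x. z \<in> B'} = lam"
      using card_blocks_through_pair[OF x] S(1) by auto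
  qed
  then have "(\<Sum>B'\<in>blocks_through x. card {z \<in> S. z \<in> B'}) = (\<Sum>z\<in>S. lam)"
    using sum_multicount_gen[OF fin(2,1), of "\<lambda>B z. z \<in> B" "\<lambda>_. lam"] by simp
  moreover have "card {z \<in> S. z \<in> B'} = card (B \<inter> S)" if "B' \<in> blocks_through x" for B'
  proof -
    have "{z \<in> S. z \<in> B'} = B' \<inter> S" by blast
    moreover have "S \<subseteq> P" using S(1) by blast
    ultimately show ?thesis using card_inter_invariant_eq[OF _ S(2) that B] by simp
  qed
  ultimately show ?thesis by simp
qed

lemma card_blocks_through_times:
  assumes "x \<in> P"
  shows "card (blocks_through x) * (k - 1) = (v - 1) * lam"
proof -
  obtain B where B: "B \<in> blocks_through x" using blocks_through_nonempty[OF assms] by blast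
  have "card (P - {x}) * lam = card (blocks_through x) * card (B \<inter> (P - {x}))"
    by (rule card_invariant_times_lam[OF assms subset_refl _ B])
      (simp add: stabilizer_image_subset[OF perm_group])
  moreover have "B \<inter> (P - {x}) = B - {x}"
    using B block_subset by (auto simp: blocks_through_def)
  moreover have "card (B - {x}) = k - 1"
    using B card_block block_subset finite_subset_points by (auto simp: blocks_through_def)
  ultimately show ?thesis
    using assms card_points finite_points by (simp add: mult.commute)
qed

end

locale flag_transitive_square_design =
  flag_transitive_design P \<B> G "k^2" k lam for P \<B> G k lam
begin

lemma card_blocks_through:
  assumes "x \<in> P"
  shows "card (blocks_through x) = lam * (k + 1)"
proof -
  have "k^2 - 1 = (k - 1) * (k + 1)"
    by (simp add: power2_eq_square algebra_simps)
  then have "card (blocks_through x) * (k - 1) = lam * (k + 1) * (k - 1)"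
    using card_blocks_through_times[OF assms] by (metis mult.assoc mult.commute)
  then show ?thesis using block_size by simp
qed

lemma card_invariant_eq:
  assumes "x \<in> P" "S \<subseteq> P - {x}" "\<forall>g\<in>stabilizer G x. g ` S \<subseteq> S" "B \<in> blocks_through x"
  shows "card S = (k + 1) * card (B \<inter> S)"
proof -
  have "lam * card S = lam * ((k + 1) * card (B \<inter> S))"
    using card_invariant_times_lam[OF assms] card_blocks_through[OF assms(1)]
    by (metis mult.assoc mult.commute)
  then show ?thesis using lam_pos by simp
qed

lemma card_orbit_stabilizer:
  assumes "x \<in> P" "y \<in> P" "y \<noteq> x" "B \<in> \<B>" "x \<in> B"
  shows "card (orbit (stabilizer G x) y) = (k + 1) * card (B \<inter> orbit (stabilizer G x) y)"
  using assms orbit_stabilizer_subset[OF perm_group] orbit_stabilizer_invariant[OF perm_group]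
  by (intro card_invariant_eq) (auto simp: blocks_through_def)

lemma large_stabilizer:
  assumes "x \<in> P"
  shows "large_subgroup (stabilizer G x) G"
proof -
  let ?s = "card (stabilizer G x)"
  have "1 * (k + 1) \<le> lam * (k + 1)"
    using lam_pos by (intro mult_le_mono1) simp
  then have "k < ?s"
    using card_blocks_through_le_card_stabilizer[OF assms] card_blocks_through[OF assms] by simp
  then have "k^2 * ?s < ?s^2 * ?s" by (simp add: power_strict_mono)
  moreover have "card G \<le> k^2 * ?s"
    using card_le_card_times_card_stabilizer[OF perm_group finite_points assms] card_points
    by simp
  ultimately have "card G < ?s^2 * ?s" by linarith
  then show ?thesis
    by (simp add: large_subgroup_def stabilizer_subset power2_eq_square power3_eq_cube)
qed

lemma primitive: "primitive_on P G"
  unfolding primitive_on_def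
proof (intro conjI transitive allI impI)
  fix D assume D: "D \<subseteq> P \<and> (\<forall>g\<in>G. g ` D = D \<or> g ` D \<inter> D = {})"
  show "card D \<le> 1 \<or> D = P"
  proof (cases "card D \<le> 1")
    case False
    then obtain x where x: "x \<in> D" by fastforce
    then have "x \<in> P" using D by blast
    have "g ` (D - {x}) \<subseteq> D - {x}" if "g \<in> stabilizer G x" for g
    proof -
      have "g \<in> G" "g x = x" "inj g"
        using that perm_group by (auto simp: stabilizer_def perm_group_on_def permutes_inj)
      moreover have "x \<in> g ` D \<inter> D"
        using x \<open>g x = x\<close> by (metis IntI image_eqI)
      ultimately have "g ` D = D" using D by (metis empty_iff)
      with \<open>g x = x\<close> \<open>inj g\<close> show ?thesis by (simp add: image_set_diff)
    qed
    moreover obtain B where "B \<in> blocks_through x"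
      using blocks_through_nonempty[OF \<open>x \<in> P\<close>] by blast
    ultimately have "card (D - {x}) = (k + 1) * card (B \<inter> (D - {x}))"
      using D \<open>x \<in> P\<close> by (intro card_invariant_eq) auto
    moreover have "finite D" using D by (simp add: finite_subset_points)
    ultimately have "card D = 1 + (k + 1) * card (B \<inter> (D - {x}))"
      using x False by simp
    then have "card D mod (k + 1) = 1 mod (k + 1)"
      by (simp only: mod_mult_self2)
    then have "card D mod (k + 1) = 1"
      using block_size by simp
    moreover obtain d where "card D * d = k^2"
      using block_card_dvd[OF perm_group transitive finite_points] D x card_points
      by (metis dvd_def)
    ultimately have "card D = card P"
      using factor_of_square_mod_Suc False card_points by fastforce
    then have "D = P"
      using card_subset_eq[OF finite_points] D by blast
    then show ?thesis by simp
  qed simp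
qed

end

theorem lemma3p2:
  fixes P :: "'a set" and \<B> :: "'a set set" and G :: "('a \<Rightarrow> 'a) set"
    and k lam :: nat
  assumes "nontrivial_design P \<B> (k^2) k lam"
    and "lam dvd k"
    and "automorphism_group P \<B> G"
    and "flag_transitive P \<B> G"
  shows "primitive_on P G
    \<and> (\<forall>x\<in>P. large_subgroup (stabilizer G x) G)
    \<and> (\<forall>x\<in>P. \<forall>y\<in>P. y \<noteq> x \<longrightarrow>
          (\<forall>B\<in>\<B>. x \<in> B \<longrightarrow>
             card (orbit (stabilizer G x) y) = (k + 1) * card (B \<inter> orbit (stabilizer G x) y))
          \<and> (k + 1) dvd card (orbit (stabilizer G x) y))"
proof -
  have "0 < lam"
    using assms(1,2) by (cases "lam = 0") (auto simp: nontrivial_design_def)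
  then interpret flag_transitive_square_design P \<B> G k lam
    using assms by unfold_locales
  have "(k + 1) dvd card (orbit (stabilizer G x) y)" if xy: "x \<in> P" "y \<in> P" "y \<noteq> x" for x y
  proof -
    obtain B where "B \<in> \<B>" "x \<in> B"
      using blocks_through_nonempty[OF \<open>x \<in> P\<close>] by (auto simp: blocks_through_def)
    then have "card (orbit (stabilizer G x) y) = (k + 1) * card (B \<inter> orbit (stabilizer G x) y)"
      by (rule card_orbit_stabilizer[OF xy])
    then show ?thesis by (metis dvd_triv_left)
  qed
  with primitive large_stabilizer card_orbit_stabilizer show ?thesis
    by simp
qed

end
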